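(* Let $R$ be a UFD with fraction field $K$, let $A(X), B(X)\in R[X]$ with $A(0)=B(0)=0$, and let $b\in R\setminus\{0\}$ with $\gcd(B,b)=1$. If $A\!\left(\frac{B(X)}{b}\right)\in R[X]$, then there exists $C(X)\in R[X]$ with $A(X)=C(bX)$; equivalently, for every $k\ge1$ the coefficient of $X^k$ in $A(X)$ is divisible by $b^k$.
   Context: For a polynomial $P\in R[X]$ and $c\in R$, $\gcd(P,c)=1$ means that no prime element of $R$ divides both $c$ and all coefficients of $P$. *)

theory Defs
  imports "HOL-Computational_Algebra.Polynomial_Factorial"
begin

(* gcd(P,c) = 1 in the paper's sense: no prime element of R divides both c
   and all coefficients of P *)
definition poly_const_coprime :: "'a::{factorial_semiring,idom} poly \<Rightarrow> 'a \<Rightarrow> bool" where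
  "poly_const_coprime P c \<longleftrightarrow>
     (\<forall>p. prime_elem p \<longrightarrow> \<not> (p dvd c \<and> (\<forall>i. p dvd coeff P i)))"

end

theory Submission
  imports Defs
begin

(* Write A = \<Sum>k\<le>n a_k X^k with n = deg A.  Multiplying A(B/b) = D by b^n clears the
   denominators:  \<Sum>k\<le>n (a_k b^(n-k)) B^k = b^n D  in R[X].
   Fix a prime p dividing b, with e = multiplicity of p in b.  Since gcd(B,b) = 1,
   p does not divide all coefficients of B; let m be the first index with p not
   dividing the m-th coefficient.  Then the p-part of B^k starts exactly at degree k m,
   and since B(0) = 0 (so m > 0) the powers B^k are "p-adically independent":
   p^N divides all coefficients of \<Sum> c_k B^k only if p^N divides every c_k.
   Applied with N = n e this gives p^(n e) | a_k b^(n-k), hence p^(k e) | a_k. *)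

text \<open>If the first coefficient of P not divisible by the prime p sits in degree m and
  that of Q in degree m', then the first such coefficient of P Q sits in degree m + m'
  (a p-adic form of Gauss's lemma).\<close>

lemma prime_low_coeffs_mult:
  fixes P Q :: "'a::idom poly"
  assumes p: "prime_elem p"
    and P_low: "\<forall>i<m. p dvd coeff P i" and P_m: "\<not> p dvd coeff P m"
    and Q_low: "\<forall>i<m'. p dvd coeff Q i" and Q_m': "\<not> p dvd coeff Q m'"
  shows "(\<forall>j<m + m'. p dvd coeff (P * Q) j) \<and> \<not> p dvd coeff (P * Q) (m + m')"
proof (intro conjI allI impI)
  fix j assume "j < m + m'"
  then have "p dvd coeff P i * coeff Q (j - i)" if "i \<le> j" for i
    using P_low Q_low that by (cases "i < m") auto
  then show "p dvd coeff (P * Q) j"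
    by (auto simp: coeff_mult intro: dvd_sum)
next
  let ?t = "\<lambda>i. coeff P i * coeff Q (m + m' - i)"
  have others: "p dvd (\<Sum>i\<in>{..m + m'} - {m}. ?t i)"
  proof (rule dvd_sum)
    fix i assume "i \<in> {..m + m'} - {m}"
    then have "i < m \<or> m + m' - i < m'" by auto
    then show "p dvd ?t i" using P_low Q_low by auto
  qed
  have "coeff (P * Q) (m + m') = ?t m + (\<Sum>i\<in>{..m + m'} - {m}. ?t i)"
    unfolding coeff_mult by (rule sum.remove) auto
  moreover have "\<not> p dvd ?t m"
    using P_m Q_m' p by (simp add: prime_elem_dvd_mult_iff)
  ultimately show "\<not> p dvd coeff (P * Q) (m + m')"
    using others by (simp add: dvd_add_left_iff)
qed

lemma prime_low_coeffs_power:
  fixes B :: "'a::idom poly"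
  assumes p: "prime_elem p"
    and low: "\<forall>i<m. p dvd coeff B i" and nd: "\<not> p dvd coeff B m"
  shows "(\<forall>j<k * m. p dvd coeff (B ^ k) j) \<and> \<not> p dvd coeff (B ^ k) (k * m)"
proof (induction k)
  case 0
  then show ?case using p by (simp add: prime_elem_def)
next
  case (Suc k)
  then show ?case
    using prime_low_coeffs_mult[where m' = "k * m" and Q = "B ^ k", OF p low nd] by simp
qed

text \<open>If B(0) = 0 and the prime p does not divide all coefficients of B, then p divides
  all coefficients of \<Sum> c_k B^k only if p divides every c_k: at the degree k_1 m, where
  k_1 is the first index with p not dividing c_k, exactly one term survives modulo p.\<close>

lemma prime_dvd_power_combination:
  fixes B :: "'a::idom poly"
  assumes p: "prime_elem p" and B0: "coeff B 0 = 0" and B_nd: "\<not> [:p:] dvd B"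
    and S: "[:p:] dvd (\<Sum>k\<le>n. smult (c k) (B ^ k))"
  shows "\<forall>k\<le>n. p dvd c k"
proof (rule ccontr)
  assume "\<not> (\<forall>k\<le>n. p dvd c k)"
  then obtain k1 where k1: "k1 \<le> n" "\<not> p dvd c k1" and below: "\<forall>k<k1. k \<le> n \<longrightarrow> p dvd c k"
    using exists_least_iff[of "\<lambda>k. k \<le> n \<and> \<not> p dvd c k"] by auto
  obtain m where m: "\<not> p dvd coeff B m" and low: "\<forall>i<m. p dvd coeff B i"
    using B_nd exists_least_iff[of "\<lambda>i. \<not> p dvd coeff B i"] by (auto simp: const_poly_dvd_iff)
  have "m > 0" using m B0 by (cases m) auto
  let ?t = "\<lambda>k. c k * coeff (B ^ k) (k1 * m)"
  have others: "p dvd (\<Sum>k\<in>{..n} - {k1}. ?t k)"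
  proof (rule dvd_sum)
    fix k assume k: "k \<in> {..n} - {k1}"
    show "p dvd ?t k"
    proof (cases "k < k1")
      case True
      then show ?thesis using below k by simp
    next
      case False
      with k \<open>m > 0\<close> have "k1 * m < k * m" by simp
      then show ?thesis using prime_low_coeffs_power[OF p low m, of k] by simp
    qed
  qed
  have "coeff (\<Sum>k\<le>n. smult (c k) (B ^ k)) (k1 * m) = ?t k1 + (\<Sum>k\<in>{..n} - {k1}. ?t k)"
    using k1(1) by (simp add: coeff_sum sum.remove)
  moreover have "p dvd coeff (\<Sum>k\<le>n. smult (c k) (B ^ k)) (k1 * m)"
    using S by (simp add: const_poly_dvd_iff)
  ultimately have "p dvd ?t k1" using others by (simp add: dvd_add_left_iff)
  then show False
    using p k1(2) prime_low_coeffs_power[OF p low m, of k1] by (simp add: prime_elem_dvd_mult_iff)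
qed

lemma prime_power_dvd_power_combination:
  fixes B :: "'a::idom poly"
  assumes p: "prime_elem p" and B0: "coeff B 0 = 0" and B_nd: "\<not> [:p:] dvd B"
    and "[:p ^ N:] dvd (\<Sum>k\<le>n. smult (c k) (B ^ k))"
  shows "\<forall>k\<le>n. p ^ N dvd c k"
  using assms(4)
proof (induction N arbitrary: c)
  case 0
  then show ?case by simp
next
  case (Suc N)
  have "[:p:] dvd [:p ^ Suc N:]" by simp
  then have "\<forall>k\<le>n. p dvd c k"
    using prime_dvd_power_combination[OF p B0 B_nd] Suc.prems dvd_trans by blast
  then obtain d where d: "\<And>k. k \<le> n \<Longrightarrow> c k = p * d k"
    unfolding dvd_def by metis
  have "(\<Sum>k\<le>n. smult (c k) (B ^ k)) = [:p:] * (\<Sum>k\<le>n. smult (d k) (B ^ k))"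
    by (simp add: sum_distrib_left d mult.commute)
  moreover have "[:p ^ Suc N:] = [:p:] * [:p ^ N:]" by simp
  moreover have "[:p:] \<noteq> 0" using p by auto
  ultimately have "[:p ^ N:] dvd (\<Sum>k\<le>n. smult (d k) (B ^ k))"
    using Suc.prems dvd_mult_cancel_left by metis
  then have "\<forall>k\<le>n. p ^ N dvd d k" by (rule Suc.IH)
  then show ?case by (simp add: d)
qed

lemma to_fract_power: "to_fract (x ^ k) = to_fract x ^ k"
  by (induction k) simp_all

lemma fract_poly_power: "fract_poly (P ^ k) = fract_poly P ^ k"
  by (induction k) simp_all

lemma fract_poly_sum: "fract_poly (\<Sum>i\<in>S. f i) = (\<Sum>i\<in>S. fract_poly (f i))"
  by (induction S rule: infinite_finite_induct) simp_all

lemma smult_sum_right: "smult a (\<Sum>i\<in>S. f i) = (\<Sum>i\<in>S. smult a (f i))"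
  by (induction S rule: infinite_finite_induct) (simp_all add: smult_add_right)

lemma pcompose_monom: "pcompose (monom c n) q = smult c (q ^ n)"
  by (induction n) (simp_all add: monom_Suc pcompose_pCons monom_0)

lemma pcompose_as_sum:
  assumes "degree P \<le> n"
  shows "pcompose P q = (\<Sum>k\<le>n. smult (coeff P k) (q ^ k))"
proof -
  have "pcompose P q = pcompose (\<Sum>k\<le>n. monom (coeff P k) k) q"
    using poly_as_sum_of_monoms'[OF assms] by simp
  then show ?thesis by (simp add: pcompose_sum pcompose_monom)
qed

lemma clear_denominators:
  fixes A B D :: "'a::idom poly"
  assumes b: "b \<noteq> 0" and deg: "degree A \<le> n"
    and D: "pcompose (fract_poly A) (smult (inverse (to_fract b)) (fract_poly B)) = fract_poly D"
  shows "(\<Sum>k\<le>n. smult (coeff A k * b ^ (n - k)) (B ^ k)) = smult (b ^ n) D"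
proof -
  let ?b = "to_fract b"
  have scale: "to_fract (coeff A k * b ^ (n - k)) = ?b ^ n * (to_fract (coeff A k) * inverse ?b ^ k)"
    if "k \<le> n" for k
    using b that by (simp add: to_fract_power power_diff_conv_inverse mult_ac)
  have "fract_poly (\<Sum>k\<le>n. smult (coeff A k * b ^ (n - k)) (B ^ k))
      = (\<Sum>k\<le>n. smult (to_fract (coeff A k * b ^ (n - k))) (fract_poly B ^ k))"
    by (simp add: fract_poly_sum fract_poly_power del: to_fract_mult)
  also have "\<dots> = (\<Sum>k\<le>n. smult (?b ^ n)
                  (smult (to_fract (coeff A k)) (smult (inverse ?b) (fract_poly B) ^ k)))"
    by (rule sum.cong) (simp_all add: scale smult_power del: to_fract_mult)
  also have "\<dots> = smult (?b ^ n)
      (\<Sum>k\<le>n. smult (to_fract (coeff A k)) (smult (inverse ?b) (fract_poly B) ^ k))"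
    by (simp add: smult_sum_right)
  also have "\<dots> = smult (?b ^ n) (fract_poly D)"
    using D pcompose_as_sum[of "fract_poly A" n] deg by (simp add: coeff_map_poly degree_map_poly)
  also have "\<dots> = fract_poly (smult (b ^ n) D)"
    by (simp add: to_fract_power)
  finally show ?thesis by (simp only: fract_poly_eq_iff)
qed

lemma multiplicity_power_le_of_dvd:
  fixes a b p :: "'a::factorial_semiring"
  assumes p: "prime_elem p" and a: "a \<noteq> 0" and b: "b \<noteq> 0" and k: "k \<le> n"
    and dvd: "p ^ (n * multiplicity p b) dvd a * b ^ (n - k)"
  shows "multiplicity p (b ^ k) \<le> multiplicity p a"
proof -
  define e where "e = multiplicity p b"
  have "n * e \<le> multiplicity p (a * b ^ (n - k))"
    using a b prime_elem_not_unit[OF p] dvd by (intro multiplicity_geI) (simp_all add: e_def)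
  also have "\<dots> = multiplicity p a + (n - k) * e"
    using a b p
    by (simp add: prime_elem_multiplicity_mult_distrib prime_elem_multiplicity_power_distrib e_def)
  finally have "n * e \<le> multiplicity p a + (n - k) * e" .
  moreover have "n * e = k * e + (n - k) * e"
    using k by (simp add: add_mult_distrib[symmetric])
  ultimately have "k * e \<le> multiplicity p a" by linarith
  then show ?thesis
    using b p by (simp add: prime_elem_multiplicity_power_distrib e_def)
qed

text \<open>The cleared identity forces b^k | a_k: for each prime p | b, the independence of the
  powers of B modulo p^(n e) gives p^(n e) | a_k b^(n-k); compare multiplicities.\<close>

lemma power_dvd_coeff:
  fixes A B D :: "'a::{factorial_semiring,idom} poly"
  assumes b: "b \<noteq> 0" and B0: "coeff B 0 = 0" and coprime: "poly_const_coprime B b"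
    and key: "(\<Sum>k\<le>n. smult (coeff A k * b ^ (n - k)) (B ^ k)) = smult (b ^ n) D"
    and k: "k \<le> n"
  shows "b ^ k dvd coeff A k"
proof (cases "coeff A k = 0")
  case False
  show ?thesis
  proof (rule multiplicity_le_imp_dvd)
    fix p :: 'a assume "prime p"
    then have p: "prime_elem p" by simp
    have "p ^ (n * multiplicity p b) dvd coeff A k * b ^ (n - k)"
    proof (cases "p dvd b")
      case True
      then have B_nd: "\<not> [:p:] dvd B"
        using coprime p by (auto simp: poly_const_coprime_def const_poly_dvd_iff)
      have "(p ^ multiplicity p b) ^ n dvd b ^ n"
        by (simp add: dvd_power_same multiplicity_dvd)
      then have "[:p ^ (n * multiplicity p b):] dvd smult (b ^ n) D"
        by (simp add: const_poly_dvd_iff power_mult[symmetric] mult.commute)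
      then have "\<forall>j\<le>n. p ^ (n * multiplicity p b) dvd coeff A j * b ^ (n - j)"
        unfolding key[symmetric] by (rule prime_power_dvd_power_combination[OF p B0 B_nd])
      then show ?thesis using k by blast
    qed (simp add: not_dvd_imp_multiplicity_0)
    then show "multiplicity p (b ^ k) \<le> multiplicity p (coeff A k)"
      using multiplicity_power_le_of_dvd[OF p False b k] by blast
  qed (use b in simp)
qed simp

lemma coeff_monom_sum:
  "coeff (\<Sum>i\<le>n. monom (f i) i) k = (if k \<le> n then f k else 0)"
  by (simp add: coeff_sum)

lemma pcompose_scale_exists:
  fixes A :: "'a::algebraic_semidom poly"
  assumes "\<forall>k. b ^ k dvd coeff A k"
  shows "\<exists>C. A = pcompose C [:0, b:]"
proof
  let ?C = "\<Sum>i\<le>degree A. monom (coeff A i div b ^ i) i"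
  show "A = pcompose ?C [:0, b:]"
  proof (rule poly_eqI)
    fix i
    have "coeff (pcompose ?C [:0, b:]) i = b ^ i * (if i \<le> degree A then coeff A i div b ^ i else 0)"
      by (simp only: coeff_pcompose_linear coeff_monom_sum)
    also have "\<dots> = coeff A i"
      using assms coeff_eq_0[of A i] by auto
    finally show "coeff A i = coeff (pcompose ?C [:0, b:]) i" ..
  qed
qed

theorem mainTheorem2:
  fixes A B :: "'a::{factorial_semiring,idom} poly" and b :: 'a
  assumes "poly A 0 = 0" and "poly B 0 = 0"
    and "b \<noteq> 0"
    and "poly_const_coprime B b"
    and "\<exists>D :: 'a poly. pcompose (map_poly to_fract A)
                          (smult (inverse (to_fract b)) (map_poly to_fract B))
                        = map_poly to_fract D"
  shows "(\<exists>C :: 'a poly. A = pcompose C [:0, b:])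
         \<and> (\<forall>k\<ge>1. b ^ k dvd coeff A k)"
proof -
  obtain D where "pcompose (fract_poly A) (smult (inverse (to_fract b)) (fract_poly B))
                    = fract_poly D"
    using assms(5) by blast
  then have key: "(\<Sum>k\<le>degree A. smult (coeff A k * b ^ (degree A - k)) (B ^ k))
                    = smult (b ^ degree A) D"
    by (rule clear_denominators[OF assms(3) order.refl])
  have B0: "coeff B 0 = 0" using assms(2) by (simp add: poly_0_coeff_0)
  have "b ^ k dvd coeff A k" for k
  proof (cases "k \<le> degree A")
    case True
    then show ?thesis using power_dvd_coeff[OF assms(3) B0 assms(4) key] by blast
  qed (simp add: coeff_eq_0)
  then show ?thesis using pcompose_scale_exists by blast
qed

end
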